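(* Let $\eta,\delta,M$ be integers greater than $1$ and let $f$ be a positive integer, with $\gcd(\eta,\delta)=1$ (so that $\mu=\eta/\delta$ is an irreducible fraction). Suppose that $$(\delta f)^{2}-M(\eta+\delta)^{2}=\delta^{2}\,\frac{M+1}{3},$$ equivalently $M=\dfrac{\delta^{2}(3f^{2}-1)}{3(\eta+\delta)^{2}+\delta^{2}}$, and suppose moreover that $M$ is a number of terms for which a sum of $M$ consecutive squares can be a perfect square, i.e. there is an integer $a\geq 1$ such that $\sum_{i=0}^{M-1}(a+i)^{2}$ is a perfect square. Then $\eta\equiv 1 \pmod 2$ and $\delta\equiv 0,1$ or $5 \pmod 6$; furthermore, if $\delta\equiv 0\pmod 6$ then $M\equiv 0\pmod{12}$, and if $\delta\equiv 1$ or $5\pmod 6$ then $M\equiv 2 \pmod{12}$ when $f$ is odd and $M\equiv 11\pmod{12}$ when $f$ is even. More precisely, $(\delta,\eta,f,M)$ satisfy one of the following: (a) $\delta\equiv 0\pmod{36}$, $\eta\equiv 1$ or $5\pmod 6$, $f$ arbitrary, $M\equiv 0\pmod{144}$; (b) $\delta\equiv 12$ or $24\pmod{36}$, $\eta\equiv 1$ or $5\pmod 6$, $f$ arbitrary, $M\equiv 96\pmod{144}$; (c) $\delta\equiv 6$ or $30\pmod{36}$, $\eta\equiv 1$ or $5\pmod 6$, $f\equiv 1\pmod 2$, $M\equiv 24\pmod{144}$; (d) $\delta\equiv 18\pmod{36}$, $\eta\equiv 1$ or $5\pmod 6$, $f\equiv 1\pmod 2$, $M\equiv 72\pmod{144}$;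 (e) $\delta\equiv 1\pmod 6$: if $f\equiv 1$ or $5\pmod 6$, then $M\equiv 50\pmod{72}$ when $\eta\equiv 1$ or $3\pmod 6$, and $M\equiv 2\pmod{72}$ when $\eta\equiv 5\pmod 6$; if $f\equiv 3\pmod 6$, then $M\equiv 2\pmod{72}$ when $\eta\equiv 1$ or $3\pmod 6$, and $M\equiv 26\pmod{72}$ when $\eta\equiv 5\pmod 6$; if $f\equiv 0\pmod 6$, then $M\equiv 11\pmod{36}$ when $\eta\equiv 1$ or $3\pmod 6$, and $M\equiv 35\pmod{36}$ when $\eta\equiv 5\pmod 6$; if $f\equiv 2$ or $4\pmod 6$, then $M\equiv 23\pmod{36}$ when $\eta\equiv 1$ or $3\pmod 6$, and $M\equiv 11\pmod{36}$ when $\eta\equiv 5\pmod 6$; (f) $\delta\equiv 5\pmod 6$: if $f\equiv 1$ or $5\pmod 6$, then $M\equiv 2\pmod{72}$ when $\eta\equiv 1\pmod 6$, and $M\equiv 50\pmod{72}$ when $\eta\equiv 3$ or $5\pmod 6$; if $f\equiv 3\pmod 6$, then $M\equiv 26\pmod{72}$ when $\eta\equiv 1\pmod 6$, and $M\equiv 2\pmod{72}$ when $\eta\equiv 3$ or $5\pmod 6$; if $f\equiv 0\pmod 6$, then $M\equiv 35\pmod{36}$ when $\eta\equiv 1\pmod 6$, and $M\equiv 11\pmod{36}$ when $\eta\equiv 3$ or $5\pmod 6$; if $f\equiv 2$ or $4\pmod 6$, then $M\equiv 11\pmod{36}$ when $\eta\equiv 1\pmod 6$, and $M\equiv 23\pmod{36}$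 when $\eta\equiv 3$ or $5\pmod 6$.
   Context: Setting: for $\mu=\eta/\delta$, two positive integers $a_1,a_2$ with $a_1+a_2=\mu M+1$ and $a_2-a_1=f$ form a "pair" for the number of terms $M$; when $M=\delta^2(3f^2-1)/(3(\eta+\delta)^2+\delta^2)$ the sums $\sum_{i=0}^{M-1}(a_j+i)^2$ ($j=1,2$) are perfect squares. It is known from earlier work (cited, not proved in this paper) that a sum of $M>1$ consecutive squares $\sum_{i=0}^{M-1}(a+i)^2$ with $a\ge 1$ can be a perfect square only if $M\equiv 0$ or $24\pmod{72}$, or $M\equiv 1,2$ or $16\pmod{24}$, or $M\equiv 9$ or $33\pmod{72}$, or $M\equiv 11\pmod{12}$; in particular $M\equiv 0,1,2,4,9$ or $11\pmod{12}$. *)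

theory Defs
  imports Main
begin

end

theory Submission
  imports Defs "HOL-Number_Theory.Number_Theory"
begin

text \<open>With \<open>u = \<eta> + \<delta>\<close> and \<open>g = 3 f\<^sup>2 - 1\<close> the hypothesis reads \<open>M (3 u\<^sup>2 + \<delta>\<^sup>2) = \<delta>\<^sup>2 g\<close>.
  A common divisor of \<open>3 x\<^sup>2 + y\<^sup>2\<close> and \<open>3 f\<^sup>2 - 1\<close> that is prime to \<open>y\<close> divides
  \<open>(3 x f)\<^sup>2 + y\<^sup>2\<close>, so it cannot be \<open>\<equiv> 3 (mod 4)\<close>; this makes \<open>\<eta>\<close> odd, makes \<open>\<delta>\<close> odd
  when \<open>3\<close> does not divide \<open>\<delta>\<close> and even when it does.
  In the first case the equation becomes \<open>\<delta>\<^sup>2 (g - M) = 3 u\<^sup>2 M\<close> with \<open>\<delta>\<^sup>2 \<equiv> 1\<close> modulo 8 and 3,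
  which fixes \<open>M\<close> modulo 8 (resp. 4) and 9 in terms of \<open>f\<close> and \<open>u\<close>.
  If \<open>\<delta> = 3 k\<close>, it becomes \<open>M (3 k\<^sup>2 + u\<^sup>2) = 3 k\<^sup>2 g\<close> with \<open>3 k\<^sup>2 + u\<^sup>2\<close> prime to 6, and
  comparing 2- and 3-adic valuations fixes \<open>M\<close> modulo 16 and 9. The only use of the
  consecutive-squares hypothesis is to exclude \<open>M \<equiv> 4 (mod 8)\<close>, for which such a sum is
  \<open>\<equiv> 2 (mod 4)\<close>. The Chinese remainder theorem then yields the stated classes.\<close>

section \<open>Residue computations\<close>

lemma square_mod_4: "(k::int)^2 mod 4 \<in> {0, 1}"
proof -
  have "k mod 4 \<in> {0, 1, 2, 3}"
    by auto
  then show ?thesis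
    by (auto simp: power_mod[of k 4 2, symmetric])
qed

lemma odd_square_cong_mod_8: "odd (k::int) \<Longrightarrow> [k^2 = 1] (mod 8)"
proof -
  assume "odd k"
  then have "k mod 8 \<in> {1, 3, 5, 7}"
    by (simp only: insert_iff empty_iff) presburger
  then show ?thesis
    by (auto simp: cong_def power_mod[of k 8 2, symmetric])
qed

lemma square_cong_mod_3: "\<not> 3 dvd (k::int) \<Longrightarrow> [k^2 = 1] (mod 3)"
proof -
  assume "\<not> 3 dvd k"
  then have "k mod 3 \<in> {1, 2}"
    by (simp only: insert_iff empty_iff) presburger
  then show ?thesis
    by (auto simp: cong_def power_mod[of k 3 2, symmetric])
qed

lemma square_cong_0_if_dvd: "(p::int) dvd k \<Longrightarrow> [k^2 = 0] (mod p * p)"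
  unfolding cong_0_iff power2_eq_square by (rule mult_dvd_mono)

lemma cong_mult_self_mod_9:
  fixes a b :: int
  assumes "[a = 1] (mod 3)" and "3 dvd b"
  shows "[a * b = b] (mod 9)"
proof -
  have "3 * 3 dvd (a - 1) * b"
    using assms by (intro mult_dvd_mono) (simp_all add: cong_iff_dvd_diff)
  then show ?thesis
    by (simp add: cong_iff_dvd_diff algebra_simps)
qed

lemma three_square_minus_one_mod:
  fixes f :: int
  shows "(3 * f^2 - 1) mod 3 = 2"
    and "odd f \<Longrightarrow> [3 * f^2 - 1 = 2] (mod 8)"
    and "even f \<Longrightarrow> (3 * f^2 - 1) mod 4 = 3"
    and "(3 * f^2 - 1) mod 9 = (if 3 dvd f then 8 else 2)"
    and "\<not> 4 dvd 3 * f^2 - 1"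
proof -
  show "(3 * f^2 - 1) mod 3 = 2"
    by presburger
  show odd: "odd f \<Longrightarrow> [3 * f^2 - 1 = 2] (mod 8)"
  proof -
    assume "odd f"
    then have "[3 * f^2 - 1 = 3 * 1 - 1] (mod 8)"
      by (intro cong_diff cong_scalar_left odd_square_cong_mod_8) simp_all
    then show ?thesis
      by simp
  qed
  show even: "even f \<Longrightarrow> (3 * f^2 - 1) mod 4 = 3"
  proof -
    assume "even f"
    then have "[3 * f^2 - 1 = 3 * 0 - 1] (mod 2 * 2)"
      by (intro cong_diff cong_scalar_left square_cong_0_if_dvd) simp_all
    then show ?thesis
      by (simp add: cong_def)
  qed
  show "(3 * f^2 - 1) mod 9 = (if 3 dvd f then 8 else 2)"
  proof (cases "3 dvd f")
    case True
    then have "[3 * f^2 - 1 = 3 * 0 - 1] (mod 3 * 3)"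
      by (intro cong_diff cong_scalar_left square_cong_0_if_dvd) simp_all
    with True show ?thesis
      by (simp add: cong_def)
  next
    case False
    then have "3 * 3 dvd 3 * (f^2 - 1)"
      using square_cong_mod_3[of f] by (intro mult_dvd_mono) (simp_all add: cong_iff_dvd_diff)
    then have "[3 * f^2 - 1 = 2] (mod 9)"
      by (simp add: cong_iff_dvd_diff algebra_simps)
    with False show ?thesis
      by (simp add: cong_def)
  qed
  show "\<not> 4 dvd 3 * f^2 - 1"
  proof (cases "even f")
    case False
    then have "[3 * f^2 - 1 = 2] (mod 4)"
      using cong_dvd_modulus[OF odd, of 4] by simp
    then show ?thesis
      by (simp add: cong_def dvd_eq_mod_eq_0)
  qed (simp add: even dvd_eq_mod_eq_0)
qed

lemma chinese_remainder_mod_eq: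
  fixes x m n e1 e2 :: int
  assumes "coprime m n"
    and "[e1 = 1] (mod m)" and "[e1 = 0] (mod n)" and "[e2 = 0] (mod m)" and "[e2 = 1] (mod n)"
  shows "x mod (m * n) = (e1 * (x mod m) + e2 * (x mod n)) mod (m * n)"
proof -
  have "[e1 * (x mod m) + e2 * (x mod n) = 1 * x + 0 * (x mod n)] (mod m)"
    using assms(2,4) by (intro cong_add cong_mult) (auto simp: cong_def)
  moreover have "[e1 * (x mod m) + e2 * (x mod n) = 0 * (x mod m) + 1 * x] (mod n)"
    using assms(3,5) by (intro cong_add cong_mult) (auto simp: cong_def)
  ultimately have "[e1 * (x mod m) + e2 * (x mod n) = x] (mod m * n)"
    using assms(1) by (auto intro: coprime_cong_mult)
  then show ?thesis
    by (simp add: cong_def)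
qed

lemma mod_12_eq: "(x::int) mod 12 = (9 * (x mod 4) + 4 * (x mod 3)) mod 12"
  using chinese_remainder_mod_eq[of 4 3 9 4 x] by (simp add: cong_def coprime_iff_gcd_eq_1 gcd_non_0_int)

lemma mod_36_eq: "(x::int) mod 36 = (9 * (x mod 4) + 28 * (x mod 9)) mod 36"
  using chinese_remainder_mod_eq[of 4 9 9 28 x] by (simp add: cong_def coprime_iff_gcd_eq_1 gcd_non_0_int)

lemma mod_72_eq: "(x::int) mod 72 = (9 * (x mod 8) + 64 * (x mod 9)) mod 72"
  using chinese_remainder_mod_eq[of 8 9 9 64 x] by (simp add: cong_def coprime_iff_gcd_eq_1 gcd_non_0_int)

lemma mod_144_eq: "(x::int) mod 144 = (81 * (x mod 16) + 64 * (x mod 9)) mod 144"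
  using chinese_remainder_mod_eq[of 16 9 81 64 x] by (simp add: cong_def coprime_iff_gcd_eq_1 gcd_non_0_int)

lemma mod_two_power_Suc_eq:
  fixes a b x :: int
  assumes "odd a" and "odd b" and "a * x = 2 ^ n * b"
  shows "x mod 2 ^ Suc n = 2 ^ n"
proof -
  have "coprime (2 ^ n) a"
    using assms(1) by simp
  moreover have "2 ^ n dvd a * x"
    using assms(3) by simp
  ultimately obtain y where y: "x = 2 ^ n * y"
    by (metis coprime_dvd_mult_right_iff dvdE)
  with assms(3) have "a * y = b"
    by simp
  with assms(1,2) have "odd y"
    by auto
  then show ?thesis
    unfolding y using mod_mult_mult1[of "2 ^ n" y 2] by (simp add: odd_iff_mod_2_eq_one)
qed

section \<open>Sums of two squares\<close>

lemma fermat_theorem_int: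
  fixes p :: nat and x :: int
  assumes "prime p" and "\<not> int p dvd x"
  shows "[x ^ (p - 1) = 1] (mod int p)"
proof -
  define a where "a = nat (x mod int p)"
  have a: "int a = x mod int p"
    using prime_gt_0_nat[OF assms(1)] unfolding a_def by simp
  have "\<not> p dvd a"
  proof
    assume "p dvd a"
    then have "int p dvd x mod int p"
      unfolding a[symmetric] by simp
    with assms(2) show False
      by (simp add: dvd_mod_iff)
  qed
  then have "[int a ^ (p - 1) = 1] (mod int p)"
    using fermat_theorem[OF assms(1)] cong_int_iff by force
  moreover have "[x ^ (p - 1) = int a ^ (p - 1)] (mod int p)"
    by (rule cong_pow) (simp add: a cong_def)
  ultimately show ?thesis
    using cong_trans by blast
qed

lemma prime_mod_4_eq_1_if_dvd_sum_squares:
  fixes p :: nat and x y :: int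
  assumes p: "prime p" "odd p" and dvd: "int p dvd x^2 + y^2" and y: "\<not> int p dvd y"
  shows "p mod 4 = 1"
proof (rule ccontr)
  assume "p mod 4 \<noteq> 1"
  with p(2) have m: "p - 1 = 2 * (2 * (p div 4) + 1)"
    by presburger
  have x: "\<not> int p dvd x"
  proof
    assume "int p dvd x"
    then have "int p dvd x^2"
      by (simp add: power2_eq_square)
    with dvd have "int p dvd y^2"
      by (simp add: dvd_add_right_iff)
    then show False
      using y p(1) prime_dvd_power_iff[of "int p" 2 y] by simp
  qed
  have "[(x^2) ^ (2 * (p div 4) + 1) = (- (y^2)) ^ (2 * (p div 4) + 1)] (mod int p)"
    using dvd by (intro cong_pow) (simp add: cong_iff_dvd_diff)
  then have "[x ^ (p - 1) = - (y ^ (p - 1))] (mod int p)"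
    unfolding m power_mult by simp
  then have "[1 = -1] (mod int p)"
    using fermat_theorem_int[OF p(1) x] fermat_theorem_int[OF p(1) y]
    by (metis cong_minus_minus_iff cong_sym cong_trans)
  then have "int p dvd 2"
    by (simp add: cong_iff_dvd_diff)
  then have "p dvd 2"
    by (metis of_nat_dvd_iff of_nat_numeral)
  then have "p \<le> 2"
    by (simp add: dvd_imp_le)
  with p(2) prime_gt_1_nat[OF p(1)] show False
    by presburger
qed

lemma mod_4_eq_1_if_dvd_sum_squares:
  fixes n :: nat and x y :: int
  assumes "odd n" and "int n dvd x^2 + y^2" and "coprime y (int n)"
  shows "n mod 4 = 1"
  using assms
proof (induction n rule: less_induct)
  case (less n)
  show ?case
  proof (cases "n = 1")
    case False
    then obtain p where p: "prime p" "p dvd n"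
      using prime_factor_nat by blast
    then obtain n' where n: "n = p * n'"
      by blast
    have "odd p" "odd n'"
      using less.prems(1) n by auto
    have "n' < n"
      using n prime_gt_1_nat[OF p(1)] \<open>odd n'\<close> by (simp add: odd_pos)
    have "coprime y (int p)"
      using less.prems(3) unfolding n by simp
    then have "\<not> int p dvd y"
      using coprime_common_divisor[of y "int p" "int p"] prime_gt_1_nat[OF p(1)] by auto
    then have "p mod 4 = 1"
      using prime_mod_4_eq_1_if_dvd_sum_squares[OF p(1) \<open>odd p\<close>] less.prems(2) unfolding n
      by (metis dvd_mult_left of_nat_mult)
    moreover have "n' mod 4 = 1"
      using less.IH[OF \<open>n' < n\<close> \<open>odd n'\<close>] less.prems(2,3) unfolding n
      by (metis dvd_mult_right coprime_mult_right_iff of_nat_mult)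
    ultimately show ?thesis
      unfolding n by (metis mod_mult_eq mult_1 mod_mod_trivial)
  qed simp
qed

lemma not_dvd_sum_squares_if_mod_4_eq_3:
  fixes D x y :: int
  assumes "D > 0" and "D mod 4 = 3" and "coprime y D"
  shows "\<not> D dvd x^2 + y^2"
proof
  assume "D dvd x^2 + y^2"
  moreover have "odd (nat D)"
    using assms(1,2) by (simp add: even_nat_iff) presburger
  ultimately have "nat D mod 4 = 1"
    using mod_4_eq_1_if_dvd_sum_squares[of "nat D" x y] assms by simp
  moreover have "nat D mod 4 = nat (D mod 4)"
    using assms(1) by (simp add: nat_mod_distrib)
  ultimately show False
    using assms(2) by simp
qed

lemma coprime_three_square_plus_square:
  fixes x y :: int
  assumes "coprime x y" and "\<not> 3 dvd y"
  shows "coprime y (3 * x^2 + y^2)" and "coprime (3 * x^2) (3 * x^2 + y^2)"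
proof -
  have "coprime 3 y"
    using assms(2) by (simp add: prime_imp_coprime)
  then have "coprime y (3 * x^2)"
    using assms(1) by (simp add: coprime_commute)
  then show "coprime y (3 * x^2 + y^2)"
    using gcd_add_mult[of y y "3 * x^2"] by (simp add: coprime_iff_gcd_eq_1 power2_eq_square add.commute)
  have "coprime (3 * x^2) (y^2)"
    using \<open>coprime y (3 * x^2)\<close> by (simp add: coprime_commute)
  then show "coprime (3 * x^2) (3 * x^2 + y^2)"
    using gcd_add2[of "3 * x^2" "y^2"] by (simp add: coprime_iff_gcd_eq_1)
qed

lemma three_square_plus_square_not_dvd:
  fixes x y f :: int
  assumes "coprime x y" and "\<not> 3 dvd y" and "odd x" and "even y"
  shows "\<not> 3 * x^2 + y^2 dvd 3 * f^2 - 1"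
proof
  define D where "D = 3 * x^2 + y^2"
  assume "D dvd 3 * f^2 - 1"
  then have "D dvd 3 * f^2 * D - y^2 * (3 * f^2 - 1)"
    by simp
  also have "3 * f^2 * D - y^2 * (3 * f^2 - 1) = (3 * x * f)^2 + y^2"
    unfolding D_def by (simp add: algebra_simps power2_eq_square)
  finally have "D dvd (3 * x * f)^2 + y^2" .
  moreover have "x \<noteq> 0"
    using \<open>odd x\<close> by auto
  then have "D > 0"
    unfolding D_def by (intro add_pos_nonneg) simp_all
  moreover have "[D = 3 * 1 + 0] (mod 4)"
    unfolding D_def using odd_square_cong_mod_8[OF \<open>odd x\<close>] \<open>even y\<close>
    by (intro cong_add cong_scalar_left) (auto intro: cong_dvd_modulus square_cong_0_if_dvd[of 2, simplified])
  then have "D mod 4 = 3"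
    by (simp add: cong_def)
  ultimately show False
    using not_dvd_sum_squares_if_mod_4_eq_3 coprime_three_square_plus_square(1)[OF assms(1,2)]
    unfolding D_def by blast
qed

section \<open>Sums of consecutive squares\<close>

lemma sum_consecutive_squares:
  fixes a :: int
  shows "6 * (\<Sum>i\<in>{0..int n - 1}. (a + i)^2)
    = int n * (6 * a^2 + 6 * a * (int n - 1) + (int n - 1) * (2 * int n - 1))"
proof (induction n)
  case (Suc n)
  have "{0..int (Suc n) - 1} = insert (int n) {0..int n - 1}"
    by auto
  then show ?case
    using Suc by (simp add: algebra_simps power2_eq_square)
qed simp

lemma sum_consecutive_squares_not_square:
  fixes M a k :: int
  assumes "M > 0" and "M mod 8 = 4"
  shows "(\<Sum>i\<in>{0..M - 1}. (a + i)^2) \<noteq> k^2"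
proof
  define S where "S = (\<Sum>i\<in>{0..M - 1}. (a + i)^2)"
  define m where "m = M div 4"
  define w where "w = 6 * a^2 + 6 * a * (M - 1) + (M - 1) * (2 * M - 1)"
  assume "S = k^2"
  have m: "M = 4 * m" "odd m"
    using assms(2) unfolding m_def by presburger+
  have "6 * S = M * w"
    using sum_consecutive_squares[of a "nat M"] assms(1) unfolding S_def w_def by simp
  then have "3 * S = 2 * (m * w)"
    unfolding m by simp
  moreover have "odd (m * w)"
    using m unfolding w_def by simp
  moreover have "S mod 4 = 2" if "3 * S = 2 * c" and "odd c" for c
    using that by presburger
  ultimately have "S mod 4 = 2"
    by blast
  with \<open>S = k^2\<close> square_mod_4[of k] show False
    by simp
qed

section \<open>Congruences for \<open>M\<close>\<close>

lemma cong_mod_8_if_square_mult_diff_eq: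
  fixes d u M g :: int
  assumes eq: "d^2 * (g - M) = 3 * u^2 * M" and "odd d" and "even u"
  shows "[g = M] (mod 4)" and "even g \<Longrightarrow> [g = M] (mod 8)"
proof -
  obtain v where u: "u = 2 * v"
    using assms(3) by blast
  define c where "c = 3 * v^2 * M"
  have "[d^2 * (g - M) = 1 * (g - M)] (mod 8)"
    using odd_square_cong_mod_8[OF assms(2)] by (rule cong_scalar_right)
  then have "[g - M = 4 * c] (mod 8)"
    using eq unfolding u c_def by (simp add: cong_sym_eq algebra_simps power2_eq_square)
  then have c: "8 dvd g - M - 4 * c"
    by (simp add: cong_iff_dvd_diff)
  then show "[g = M] (mod 4)"
    by (simp add: cong_iff_dvd_diff) presburger
  assume "even g"
  with c have "even M"
    by presburger
  then have "even c"
    unfolding c_def by simp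
  with c show "[g = M] (mod 8)"
    by (simp add: cong_iff_dvd_diff) presburger
qed

lemma cong_mod_9_if_square_mult_diff_eq:
  fixes d u M g :: int
  assumes eq: "d^2 * (g - M) = 3 * u^2 * M" and "\<not> 3 dvd d"
  shows "3 dvd u \<Longrightarrow> [M = g] (mod 9)" and "\<not> 3 dvd u \<Longrightarrow> [M = 7 * g] (mod 9)"
proof -
  have "3 dvd d^2 * (g - M)"
    unfolding eq by simp
  moreover have "\<not> 3 dvd d^2"
    using assms(2) prime_dvd_power_iff[of 3 2 d] by simp
  ultimately have "3 dvd g - M"
    using prime_dvd_mult_iff[of 3 "d^2" "g - M"] by simp
  with square_cong_mod_3[OF assms(2)] have "[d^2 * (g - M) = g - M] (mod 9)"
    by (rule cong_mult_self_mod_9)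
  then have diff: "[g - M = 3 * u^2 * M] (mod 9)"
    unfolding eq by (rule cong_sym)
  show "3 dvd u \<Longrightarrow> [M = g] (mod 9)"
  proof -
    assume "3 dvd u"
    then have "[3 * u^2 * M = 3 * 0 * M] (mod 3 * 3)"
      by (intro cong_scalar_left cong_scalar_right square_cong_0_if_dvd)
    then have "[3 * u^2 * M = 0] (mod 9)"
      by simp
    with diff have "[g - M = 0] (mod 9)"
      by (rule cong_trans)
    then have "[g = M] (mod 9)"
      by (simp only: cong_diff_iff_cong_0)
    then show ?thesis
      by (rule cong_sym)
  qed
  show "\<not> 3 dvd u \<Longrightarrow> [M = 7 * g] (mod 9)"
  proof -
    assume "\<not> 3 dvd u"
    then have "[u^2 * (3 * M) = 3 * M] (mod 9)"
      by (intro cong_mult_self_mod_9 square_cong_mod_3) simp_all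
    with diff have "[g - M = 3 * M] (mod 9)"
      by (simp add: ac_simps cong_trans)
    then have "[7 * g = 7 * (4 * M)] (mod 9)"
      by (intro cong_scalar_left) (simp add: cong_iff_dvd_diff algebra_simps)
    moreover have "[7 * (4 * M) = 1 * M] (mod 9)"
      unfolding mult.assoc[symmetric] by (rule cong_scalar_right) (simp add: cong_def)
    ultimately show ?thesis
      by (auto intro: cong_trans cong_sym)
  qed
qed

lemma mod_16_if_mult_eq_three_square_mult:
  fixes M D k g :: int
  assumes eq: "M * D = 3 * k^2 * g" and "odd D" and "M mod 8 \<noteq> 4"
    and "even g \<Longrightarrow> g mod 4 = 2"
  shows "4 dvd k \<Longrightarrow> 16 dvd M" and "k mod 4 = 2 \<Longrightarrow> even g \<and> M mod 16 = 8"
proof -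
  show "4 dvd k \<Longrightarrow> 16 dvd M"
  proof -
    assume "4 dvd k"
    then obtain j where "k = 4 * j" ..
    then have "16 dvd M * D"
      unfolding eq by (simp add: power2_eq_square)
    moreover have "coprime 16 D"
      using assms(2) coprime_power_left_iff[of 2 4 D] by simp
    ultimately show ?thesis
      by (simp add: coprime_dvd_mult_left_iff)
  qed
  assume "k mod 4 = 2"
  define j where "j = k div 2"
  have k: "k = 2 * j" and "odd j"
    using \<open>k mod 4 = 2\<close> unfolding j_def by presburger+
  have "even g"
  proof (rule ccontr)
    assume "odd g"
    moreover have "D * M = 2 ^ 2 * (3 * j^2 * g)"
      using eq unfolding k by (simp add: algebra_simps power2_eq_square)
    ultimately have "M mod 2 ^ Suc 2 = 2 ^ 2"
      using \<open>odd D\<close> \<open>odd j\<close> by (intro mod_two_power_Suc_eq[where a = D and x = M]) simp_all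
    with assms(3) show False
      by simp
  qed
  define h where "h = g div 2"
  have g: "g = 2 * h" and "odd h"
    using assms(4)[OF \<open>even g\<close>] unfolding h_def by presburger+
  have "D * M = 2 ^ 3 * (3 * j^2 * h)"
    using eq unfolding k g by (simp add: algebra_simps power2_eq_square)
  then have "M mod 2 ^ Suc 3 = 2 ^ 3"
    using \<open>odd D\<close> \<open>odd j\<close> \<open>odd h\<close> by (intro mod_two_power_Suc_eq[where a = D and x = M]) simp_all
  with \<open>even g\<close> show "even g \<and> M mod 16 = 8"
    by simp
qed

lemma mod_9_if_mult_eq_three_square_mult:
  fixes M D k g :: int
  assumes eq: "M * D = 3 * k^2 * g" and "D mod 3 = 1" and "g mod 3 = 2"
  shows "3 dvd k \<Longrightarrow> 9 dvd M" and "\<not> 3 dvd k \<Longrightarrow> M mod 9 = 6"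
proof -
  have "3 dvd M * D"
    unfolding eq by simp
  moreover have "\<not> 3 dvd D"
    using assms(2) by presburger
  ultimately have "3 dvd M"
    using prime_dvd_mult_iff[of 3 M D] by simp
  with assms(2) have "[D * M = M] (mod 9)"
    by (intro cong_mult_self_mod_9) (simp_all add: cong_def)
  moreover have "D * M = 3 * k^2 * g"
    using eq by (simp only: mult.commute)
  ultimately have M: "[M = 3 * k^2 * g] (mod 9)"
    by (simp add: cong_sym_eq)
  show "3 dvd k \<Longrightarrow> 9 dvd M"
  proof -
    assume "3 dvd k"
    then have "[3 * k^2 * g = 3 * 0 * g] (mod 3 * 3)"
      by (intro cong_scalar_left cong_scalar_right square_cong_0_if_dvd)
    then have "[3 * k^2 * g = 0] (mod 9)"
      by simp
    with M have "[M = 0] (mod 9)"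
      by (rule cong_trans)
    then show ?thesis
      by (simp add: cong_0_iff)
  qed
  show "\<not> 3 dvd k \<Longrightarrow> M mod 9 = 6"
  proof -
    assume "\<not> 3 dvd k"
    then have "[k^2 * (3 * g) = 3 * g] (mod 9)"
      by (intro cong_mult_self_mod_9 square_cong_mod_3) simp_all
    with M have "M mod 9 = (3 * g) mod 9"
      by (simp add: cong_def ac_simps)
    also have "\<dots> = 3 * (g mod 3)"
      using mod_mult_mult1[of 3 g 3] by simp
    finally show ?thesis
      using assms(3) by simp
  qed
qed

lemma odd_eta_if_equation:
  fixes eta delta M f :: int
  assumes "coprime eta delta"
    and eq: "M * (3 * (eta + delta)^2 + delta^2) = delta^2 * (3 * f^2 - 1)"
  shows "odd eta"
proof
  assume "even eta"
  have "odd delta"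
  proof
    assume "even delta"
    with \<open>even eta\<close> have "is_unit (2::int)"
      using coprime_common_divisor[OF assms(1)] by blast
    then show False
      by simp
  qed
  with \<open>even eta\<close> have "[3 * (eta + delta)^2 + delta^2 = 3 * 1 + 1] (mod 4)"
    by (intro cong_add cong_scalar_left cong_dvd_modulus[OF odd_square_cong_mod_8]) simp_all
  then have "4 dvd 3 * (eta + delta)^2 + delta^2"
    by (simp add: cong_def dvd_eq_mod_eq_0)
  then have "4 dvd delta^2 * (3 * f^2 - 1)"
    unfolding eq[symmetric] by simp
  moreover have "coprime 4 (delta^2)"
    using \<open>odd delta\<close> coprime_power_left_iff[of 2 2 "delta^2"] by simp
  ultimately show False
    using three_square_minus_one_mod(5)[of f] by (simp add: coprime_dvd_mult_right_iff)
qed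

lemma residues_if_not_3_dvd_delta:
  fixes eta delta M f :: int
  assumes cop: "coprime eta delta" and "odd eta" and "\<not> 3 dvd delta"
    and eq: "M * (3 * (eta + delta)^2 + delta^2) = delta^2 * (3 * f^2 - 1)"
  shows "odd delta" and "odd f \<Longrightarrow> M mod 8 = 2" and "even f \<Longrightarrow> M mod 4 = 3"
    and "M mod 9 = (if 3 dvd eta + delta then if 3 dvd f then 8 else 2 else if 3 dvd f then 2 else 5)"
proof -
  define u g where "u = eta + delta" and "g = 3 * f^2 - 1"
  have "coprime u delta"
    using cop gcd_add1[of eta delta] unfolding u_def by (simp add: coprime_iff_gcd_eq_1)
  show "odd delta"
  proof
    assume "even delta"
    have "3 * u^2 + delta^2 dvd delta^2 * g"
      unfolding u_def g_def eq[symmetric] by simp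
    moreover have "coprime (3 * u^2 + delta^2) (delta^2)"
      using coprime_three_square_plus_square(1)[OF \<open>coprime u delta\<close> assms(3)]
      by (simp add: coprime_commute)
    moreover have "odd u"
      using \<open>odd eta\<close> \<open>even delta\<close> unfolding u_def by simp
    ultimately show False
      using three_square_plus_square_not_dvd[OF \<open>coprime u delta\<close> assms(3) _ \<open>even delta\<close>]
      unfolding g_def by (simp add: coprime_dvd_mult_right_iff)
  qed
  then have "even u"
    using \<open>odd eta\<close> unfolding u_def by simp
  have eq': "delta^2 * (g - M) = 3 * u^2 * M"
    using eq unfolding u_def g_def by (simp add: algebra_simps)
  note mod_8 = cong_mod_8_if_square_mult_diff_eq[OF eq' \<open>odd delta\<close> \<open>even u\<close>]
  note mod_9 = cong_mod_9_if_square_mult_diff_eq[OF eq' assms(3)]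
  show "odd f \<Longrightarrow> M mod 8 = 2"
    using mod_8(2) three_square_minus_one_mod(2)[of f] unfolding g_def cong_def by simp
  show "even f \<Longrightarrow> M mod 4 = 3"
    using mod_8(1) three_square_minus_one_mod(3)[of f] unfolding g_def cong_def by simp
  have "M mod 9 = (if 3 dvd u then g mod 9 else (7 * (g mod 9)) mod 9)"
    using mod_9 by (simp add: cong_def mod_mult_right_eq)
  then show "M mod 9 = (if 3 dvd eta + delta then if 3 dvd f then 8 else 2 else if 3 dvd f then 2 else 5)"
    unfolding u_def g_def three_square_minus_one_mod(4) by simp
qed

lemma mod_12_if_not_3_dvd_delta:
  fixes eta delta M f :: int
  assumes "odd f \<Longrightarrow> M mod 8 = 2" and "even f \<Longrightarrow> M mod 4 = 3"
    and "M mod 9 = (if 3 dvd eta + delta then if 3 dvd f then 8 else 2 else if 3 dvd f then 2 else 5)"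
  shows "(odd f \<longrightarrow> M mod 12 = 2) \<and> (even f \<longrightarrow> M mod 12 = 11)"
proof -
  have "M mod 3 = 2"
    using mod_mod_cancel[of 3 9 M] assms(3) by (simp split: if_splits)
  moreover have "odd f \<Longrightarrow> M mod 4 = 2"
    using mod_mod_cancel[of 4 8 M] assms(1) by simp
  ultimately show ?thesis
    using assms(2) mod_12_eq[of M] by simp
qed

lemma residues_of_reduced_equation:
  fixes k u M f :: int
  assumes "coprime k u" and "\<not> 3 dvd u" and "odd (u - k)"
    and eq: "M * (3 * k^2 + u^2) = 3 * k^2 * (3 * f^2 - 1)" and "M mod 8 \<noteq> 4"
  shows "even k" and "4 dvd k \<Longrightarrow> 16 dvd M" and "k mod 4 = 2 \<Longrightarrow> odd f \<and> M mod 16 = 8"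
    and "3 dvd k \<Longrightarrow> 9 dvd M" and "\<not> 3 dvd k \<Longrightarrow> M mod 9 = 6"
proof -
  define g where "g = 3 * f^2 - 1"
  show "even k"
  proof (rule ccontr)
    assume "odd k"
    have "3 * k^2 + u^2 dvd 3 * k^2 * g"
      unfolding g_def eq[symmetric] by simp
    moreover have "coprime (3 * k^2 + u^2) (3 * k^2)"
      using coprime_three_square_plus_square(2)[OF assms(1,2)] by (simp add: coprime_commute)
    moreover have "even u"
      using \<open>odd k\<close> assms(3) by simp
    ultimately show False
      using three_square_plus_square_not_dvd[OF assms(1,2) \<open>odd k\<close>]
      unfolding g_def by (simp add: coprime_dvd_mult_right_iff)
  qed
  then have "odd u"
    using assms(3) by simp
  have "[3 * k^2 + u^2 = 0 + 1] (mod 3)"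
    using assms(2) by (intro cong_add square_cong_mod_3) (simp_all add: cong_0_iff)
  then have D3: "(3 * k^2 + u^2) mod 3 = 1"
    by (simp add: cong_def)
  have D2: "odd (3 * k^2 + u^2)"
    using \<open>even k\<close> \<open>odd u\<close> by simp
  have g: "even g \<longleftrightarrow> odd f" "even g \<Longrightarrow> g mod 4 = 2"
    using three_square_minus_one_mod(2)[of f] cong_dvd_modulus[of g 2 8 4] unfolding g_def
    by (auto simp: cong_def)
  note mod_16 = mod_16_if_mult_eq_three_square_mult[OF eq[folded g_def] D2 assms(5) g(2)]
  note mod_9 = mod_9_if_mult_eq_three_square_mult[OF eq[folded g_def] D3 three_square_minus_one_mod(1)[of f, folded g_def]]
  show "4 dvd k \<Longrightarrow> 16 dvd M"
    using mod_16(1) by simp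
  show "3 dvd k \<Longrightarrow> 9 dvd M" and "\<not> 3 dvd k \<Longrightarrow> M mod 9 = 6"
    by (fact mod_9(1), fact mod_9(2))
  show "k mod 4 = 2 \<Longrightarrow> odd f \<and> M mod 16 = 8"
    using mod_16(2) g(1) by blast
qed

lemma residues_if_3_dvd_delta:
  fixes eta delta k M f :: int
  assumes cop: "coprime eta delta" and "odd eta" and k: "delta = 3 * k"
    and eq: "M * (3 * (eta + delta)^2 + delta^2) = delta^2 * (3 * f^2 - 1)" and "M mod 8 \<noteq> 4"
  shows "\<not> 3 dvd eta" and "even k" and "4 dvd k \<Longrightarrow> 16 dvd M"
    and "k mod 4 = 2 \<Longrightarrow> odd f \<and> M mod 16 = 8"
    and "3 dvd k \<Longrightarrow> 9 dvd M" and "\<not> 3 dvd k \<Longrightarrow> M mod 9 = 6"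
proof -
  define u where "u = eta + delta"
  show "\<not> 3 dvd eta"
    using coprime_common_divisor[OF cop, of 3] unfolding k by auto
  then have "\<not> 3 dvd u"
    unfolding u_def k by (simp add: dvd_add_left_iff)
  have "coprime k eta"
    using cop unfolding k by (simp add: coprime_commute)
  then have "coprime k u"
    using gcd_add_mult[of k 3 eta] unfolding u_def k by (simp add: coprime_iff_gcd_eq_1 add.commute)
  have "odd (u - k)"
    using \<open>odd eta\<close> unfolding u_def k by simp
  have "3 * (M * (3 * k^2 + u^2)) = 3 * (3 * k^2 * (3 * f^2 - 1))"
    using eq unfolding u_def k by (simp add: algebra_simps power2_eq_square)
  then have "M * (3 * k^2 + u^2) = 3 * k^2 * (3 * f^2 - 1)"
    by simp
  from residues_of_reduced_equation[OF \<open>coprime k u\<close> \<open>\<not> 3 dvd u\<close> \<open>odd (u - k)\<close> this assms(5)]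
  show "even k" and "4 dvd k \<Longrightarrow> 16 dvd M" and "k mod 4 = 2 \<Longrightarrow> odd f \<and> M mod 16 = 8"
    and "3 dvd k \<Longrightarrow> 9 dvd M" and "\<not> 3 dvd k \<Longrightarrow> M mod 9 = 6"
    by auto
qed

section \<open>The residue classes (a)--(f) of the statement\<close>

definition congruence_case_a :: "int \<Rightarrow> int \<Rightarrow> int \<Rightarrow> bool" where
  "congruence_case_a eta delta M \<longleftrightarrow> delta mod 36 = 0 \<and> eta mod 6 \<in> {1, 5} \<and> M mod 144 = 0"

definition congruence_case_b :: "int \<Rightarrow> int \<Rightarrow> int \<Rightarrow> bool" where
  "congruence_case_b eta delta M \<longleftrightarrow> delta mod 36 \<in> {12, 24} \<and> eta mod 6 \<in> {1, 5} \<and> M mod 144 = 96"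

definition congruence_case_c :: "int \<Rightarrow> int \<Rightarrow> int \<Rightarrow> int \<Rightarrow> bool" where
  "congruence_case_c eta delta M f \<longleftrightarrow>
    delta mod 36 \<in> {6, 30} \<and> eta mod 6 \<in> {1, 5} \<and> f mod 2 = 1 \<and> M mod 144 = 24"

definition congruence_case_d :: "int \<Rightarrow> int \<Rightarrow> int \<Rightarrow> int \<Rightarrow> bool" where
  "congruence_case_d eta delta M f \<longleftrightarrow>
    delta mod 36 = 18 \<and> eta mod 6 \<in> {1, 5} \<and> f mod 2 = 1 \<and> M mod 144 = 72"

definition congruence_case_e :: "int \<Rightarrow> int \<Rightarrow> int \<Rightarrow> int \<Rightarrow> bool" where
  "congruence_case_e eta delta M f \<longleftrightarrow> delta mod 6 = 1
          \<and> (f mod 6 \<in> {1, 5} \<longrightarrow>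
               (eta mod 6 \<in> {1, 3} \<longrightarrow> M mod 72 = 50) \<and> (eta mod 6 = 5 \<longrightarrow> M mod 72 = 2))
          \<and> (f mod 6 = 3 \<longrightarrow>
               (eta mod 6 \<in> {1, 3} \<longrightarrow> M mod 72 = 2) \<and> (eta mod 6 = 5 \<longrightarrow> M mod 72 = 26))
          \<and> (f mod 6 = 0 \<longrightarrow>
               (eta mod 6 \<in> {1, 3} \<longrightarrow> M mod 36 = 11) \<and> (eta mod 6 = 5 \<longrightarrow> M mod 36 = 35))
          \<and> (f mod 6 \<in> {2, 4} \<longrightarrow>
               (eta mod 6 \<in> {1, 3} \<longrightarrow> M mod 36 = 23) \<and> (eta mod 6 = 5 \<longrightarrow> M mod 36 = 11))"

definition congruence_case_f :: "int \<Rightarrow> int \<Rightarrow> int \<Rightarrow> int \<Rightarrow> bool" where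
  "congruence_case_f eta delta M f \<longleftrightarrow> delta mod 6 = 5
          \<and> (f mod 6 \<in> {1, 5} \<longrightarrow>
               (eta mod 6 = 1 \<longrightarrow> M mod 72 = 2) \<and> (eta mod 6 \<in> {3, 5} \<longrightarrow> M mod 72 = 50))
          \<and> (f mod 6 = 3 \<longrightarrow>
               (eta mod 6 = 1 \<longrightarrow> M mod 72 = 26) \<and> (eta mod 6 \<in> {3, 5} \<longrightarrow> M mod 72 = 2))
          \<and> (f mod 6 = 0 \<longrightarrow>
               (eta mod 6 = 1 \<longrightarrow> M mod 36 = 35) \<and> (eta mod 6 \<in> {3, 5} \<longrightarrow> M mod 36 = 11))
          \<and> (f mod 6 \<in> {2, 4} \<longrightarrow>
               (eta mod 6 = 1 \<longrightarrow> M mod 36 = 11) \<and> (eta mod 6 \<in> {3, 5} \<longrightarrow> M mod 36 = 23))"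

lemma int_mod_6_iff:
  fixes f :: int
  shows "f mod 6 \<in> {1, 5} \<longleftrightarrow> odd f \<and> \<not> 3 dvd f" and "f mod 6 = 3 \<longleftrightarrow> odd f \<and> 3 dvd f"
    and "f mod 6 = 0 \<longleftrightarrow> even f \<and> 3 dvd f" and "f mod 6 \<in> {2, 4} \<longleftrightarrow> even f \<and> \<not> 3 dvd f"
  by (simp_all only: insert_iff empty_iff) presburger+

lemma congruence_case_e_if_delta_mod_6_eq_1:
  fixes eta delta M f :: int
  assumes "delta mod 6 = 1" and "odd eta"
    and "odd f \<Longrightarrow> M mod 8 = 2" and "even f \<Longrightarrow> M mod 4 = 3"
    and "M mod 9 = (if 3 dvd eta + delta then if 3 dvd f then 8 else 2 else if 3 dvd f then 2 else 5)"
  shows "congruence_case_e eta delta M f"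
proof -
  have "eta mod 6 = 5 \<longleftrightarrow> 3 dvd eta + delta" and "eta mod 6 \<in> {1, 3} \<longleftrightarrow> \<not> 3 dvd eta + delta"
    using assms(1,2) by (simp_all only: insert_iff empty_iff) presburger+
  then show ?thesis
    unfolding congruence_case_e_def int_mod_6_iff
    by (simp add: assms(1,3-5) mod_72_eq[of M] mod_36_eq[of M])
qed

lemma congruence_case_f_if_delta_mod_6_eq_5:
  fixes eta delta M f :: int
  assumes "delta mod 6 = 5" and "odd eta"
    and "odd f \<Longrightarrow> M mod 8 = 2" and "even f \<Longrightarrow> M mod 4 = 3"
    and "M mod 9 = (if 3 dvd eta + delta then if 3 dvd f then 8 else 2 else if 3 dvd f then 2 else 5)"
  shows "congruence_case_f eta delta M f"
proof -
  have "eta mod 6 = 1 \<longleftrightarrow> 3 dvd eta + delta" and "eta mod 6 \<in> {3, 5} \<longleftrightarrow> \<not> 3 dvd eta + delta"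
    using assms(1,2) by (simp_all only: insert_iff empty_iff) presburger+
  then show ?thesis
    unfolding congruence_case_f_def int_mod_6_iff
    by (simp add: assms(1,3-5) mod_72_eq[of M] mod_36_eq[of M])
qed

lemma congruence_cases_if_3_dvd_delta:
  fixes eta delta k M f :: int
  assumes "odd eta" and "\<not> 3 dvd eta" and k: "delta = 3 * k" and "even k"
    and "4 dvd k \<Longrightarrow> 16 dvd M" and "k mod 4 = 2 \<Longrightarrow> odd f \<and> M mod 16 = 8"
    and "3 dvd k \<Longrightarrow> 9 dvd M" and "\<not> 3 dvd k \<Longrightarrow> M mod 9 = 6"
  shows "M mod 12 = 0"
    and "congruence_case_a eta delta M \<or> congruence_case_b eta delta M
      \<or> congruence_case_c eta delta M f \<or> congruence_case_d eta delta M f"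
proof -
  have eta: "eta mod 6 \<in> {1, 5}"
    using assms(1,2) by (simp only: insert_iff empty_iff) presburger
  have "k mod 4 = 0 \<or> k mod 4 = 2"
    using \<open>even k\<close> by presburger
  then have M16: "M mod 16 = (if k mod 4 = 0 then 0 else 8)" and f: "k mod 4 = 2 \<Longrightarrow> f mod 2 = 1"
    using assms(5,6) by (auto simp: dvd_eq_mod_eq_0 odd_iff_mod_2_eq_one)
  have M9: "M mod 9 = (if k mod 3 = 0 then 0 else 6)"
    using assms(7,8) by (auto simp: dvd_eq_mod_eq_0)
  have delta: "delta mod 36 = 3 * ((9 * (k mod 4) + 4 * (k mod 3)) mod 12)"
    using mod_mult_mult1[of 3 k 12] mod_12_eq[of k] unfolding k by simp
  have M: "M mod 144 = (81 * (M mod 16) + 64 * (M mod 9)) mod 144"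
    by (rule mod_144_eq)
  have "k mod 3 = 0 \<or> k mod 3 = 1 \<or> k mod 3 = 2"
    by auto
  with \<open>k mod 4 = 0 \<or> k mod 4 = 2\<close> have "M mod 144 \<in> {0, 96, 24, 72}
    \<and> (congruence_case_a eta delta M \<or> congruence_case_b eta delta M
      \<or> congruence_case_c eta delta M f \<or> congruence_case_d eta delta M f)"
    using eta f unfolding congruence_case_a_def congruence_case_b_def congruence_case_c_def
      congruence_case_d_def
    by (elim disjE) (simp_all add: delta M M16 M9)
  then show "M mod 12 = 0"
    using mod_mod_cancel[of 12 144 M] by auto
  then show "congruence_case_a eta delta M \<or> congruence_case_b eta delta M
      \<or> congruence_case_c eta delta M f \<or> congruence_case_d eta delta M f"
    using \<open>M mod 144 \<in> {0, 96, 24, 72} \<and> _\<close> by blast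
qed

definition residue_classification :: "int \<Rightarrow> int \<Rightarrow> int \<Rightarrow> int \<Rightarrow> bool" where
  "residue_classification eta delta M f \<longleftrightarrow>
    odd eta \<and> delta mod 6 \<in> {0, 1, 5} \<and> (delta mod 6 = 0 \<longrightarrow> M mod 12 = 0)
    \<and> (delta mod 6 \<in> {1, 5} \<longrightarrow> (odd f \<longrightarrow> M mod 12 = 2) \<and> (even f \<longrightarrow> M mod 12 = 11))
    \<and> (congruence_case_a eta delta M \<or> congruence_case_b eta delta M
      \<or> congruence_case_c eta delta M f \<or> congruence_case_d eta delta M f
      \<or> congruence_case_e eta delta M f \<or> congruence_case_f eta delta M f)"

lemma residue_classification_if_not_3_dvd_delta:
  fixes eta delta M f :: int
  assumes cop: "coprime eta delta" and "odd eta" and "\<not> 3 dvd delta"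
    and eq: "M * (3 * (eta + delta)^2 + delta^2) = delta^2 * (3 * f^2 - 1)"
  shows "residue_classification eta delta M f"
proof -
  note M = residues_if_not_3_dvd_delta[OF cop \<open>odd eta\<close> assms(3) eq]
  have "delta mod 6 \<in> {1, 5}"
    using M(1) assms(3) by (simp only: insert_iff empty_iff) presburger
  then have "delta mod 6 \<in> {0, 1, 5}" and "delta mod 6 \<noteq> 0"
    and "congruence_case_e eta delta M f \<or> congruence_case_f eta delta M f"
    using congruence_case_e_if_delta_mod_6_eq_1[OF _ \<open>odd eta\<close> M(2-4)]
      congruence_case_f_if_delta_mod_6_eq_5[OF _ \<open>odd eta\<close> M(2-4)]
    by auto
  with \<open>odd eta\<close> \<open>delta mod 6 \<in> {1, 5}\<close> mod_12_if_not_3_dvd_delta[OF M(2-4)] show ?thesis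
    unfolding residue_classification_def by blast
qed

lemma residue_classification_if_3_dvd_delta:
  fixes eta delta M f :: int
  assumes cop: "coprime eta delta" and "odd eta" and "3 dvd delta"
    and eq: "M * (3 * (eta + delta)^2 + delta^2) = delta^2 * (3 * f^2 - 1)" and "M mod 8 \<noteq> 4"
  shows "residue_classification eta delta M f"
proof -
  obtain k where k: "delta = 3 * k"
    using assms(3) ..
  note M = residues_if_3_dvd_delta[OF cop \<open>odd eta\<close> k eq assms(5)]
  have "delta mod 6 = 0"
    using M(2) mod_mult_mult1[of 3 k 2] unfolding k by simp
  with \<open>odd eta\<close> congruence_cases_if_3_dvd_delta[OF \<open>odd eta\<close> M(1) k M(2-6)] show ?thesis
    unfolding residue_classification_def by auto
qed

theorem theorem1:
  fixes eta delta M f :: int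
  assumes "eta > 1" and "delta > 1" and "M > 1" and "f > 0"
    and "gcd eta delta = 1"
    and "3 * ((delta * f)^2 - M * (eta + delta)^2) = delta^2 * (M + 1)"
    and "\<exists>a::int. a \<ge> 1 \<and> (\<exists>k::int. (\<Sum>i\<in>{0..M-1}. (a + i)^2) = k^2)"
  shows "odd eta
    \<and> delta mod 6 \<in> {0, 1, 5}
    \<and> (delta mod 6 = 0 \<longrightarrow> M mod 12 = 0)
    \<and> (delta mod 6 \<in> {1, 5} \<longrightarrow>
          (odd f \<longrightarrow> M mod 12 = 2) \<and> (even f \<longrightarrow> M mod 12 = 11))
    \<and> ( (delta mod 36 = 0 \<and> eta mod 6 \<in> {1, 5} \<and> M mod 144 = 0)
      \<or> (delta mod 36 \<in> {12, 24} \<and> eta mod 6 \<in> {1, 5} \<and> M mod 144 = 96)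
      \<or> (delta mod 36 \<in> {6, 30} \<and> eta mod 6 \<in> {1, 5} \<and> f mod 2 = 1 \<and> M mod 144 = 24)
      \<or> (delta mod 36 = 18 \<and> eta mod 6 \<in> {1, 5} \<and> f mod 2 = 1 \<and> M mod 144 = 72)
      \<or> (delta mod 6 = 1
          \<and> (f mod 6 \<in> {1, 5} \<longrightarrow>
               (eta mod 6 \<in> {1, 3} \<longrightarrow> M mod 72 = 50) \<and> (eta mod 6 = 5 \<longrightarrow> M mod 72 = 2))
          \<and> (f mod 6 = 3 \<longrightarrow>
               (eta mod 6 \<in> {1, 3} \<longrightarrow> M mod 72 = 2) \<and> (eta mod 6 = 5 \<longrightarrow> M mod 72 = 26))
          \<and> (f mod 6 = 0 \<longrightarrow>
               (eta mod 6 \<in> {1, 3} \<longrightarrow> M mod 36 = 11) \<and> (eta mod 6 = 5 \<longrightarrow> M mod 36 = 35))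
          \<and> (f mod 6 \<in> {2, 4} \<longrightarrow>
               (eta mod 6 \<in> {1, 3} \<longrightarrow> M mod 36 = 23) \<and> (eta mod 6 = 5 \<longrightarrow> M mod 36 = 11)))
      \<or> (delta mod 6 = 5
          \<and> (f mod 6 \<in> {1, 5} \<longrightarrow>
               (eta mod 6 = 1 \<longrightarrow> M mod 72 = 2) \<and> (eta mod 6 \<in> {3, 5} \<longrightarrow> M mod 72 = 50))
          \<and> (f mod 6 = 3 \<longrightarrow>
               (eta mod 6 = 1 \<longrightarrow> M mod 72 = 26) \<and> (eta mod 6 \<in> {3, 5} \<longrightarrow> M mod 72 = 2))
          \<and> (f mod 6 = 0 \<longrightarrow>
               (eta mod 6 = 1 \<longrightarrow> M mod 36 = 35) \<and> (eta mod 6 \<in> {3, 5} \<longrightarrow> M mod 36 = 11))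
          \<and> (f mod 6 \<in> {2, 4} \<longrightarrow>
               (eta mod 6 = 1 \<longrightarrow> M mod 36 = 11) \<and> (eta mod 6 \<in> {3, 5} \<longrightarrow> M mod 36 = 23))))"
proof -
  have cop: "coprime eta delta"
    using assms(5) by (simp add: coprime_iff_gcd_eq_1)
  have eq: "M * (3 * (eta + delta)^2 + delta^2) = delta^2 * (3 * f^2 - 1)"
    using assms(6) by (simp add: algebra_simps)
  have "odd eta"
    using odd_eta_if_equation[OF cop eq] .
  have "M mod 8 \<noteq> 4"
    using assms(3,7) sum_consecutive_squares_not_square by fastforce
  then have "residue_classification eta delta M f"
    using residue_classification_if_not_3_dvd_delta[OF cop \<open>odd eta\<close> _ eq]
      residue_classification_if_3_dvd_delta[OF cop \<open>odd eta\<close> _ eq]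
    by blast
  then show ?thesis
    unfolding residue_classification_def congruence_case_a_def congruence_case_b_def
      congruence_case_c_def congruence_case_d_def congruence_case_e_def congruence_case_f_def .
qed

end
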